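(* Fix a master index $m\in\{1,\dots,N\}$, write $\omega=\omega_m$, $\phi=\phi_m$, $\alpha=m$, $\beta=m+N$, and assume $4\omega^2\neq\omega_r^2$ for all $r\in\{1,\dots,N\}$. Define $$\Psi^{(P)}=\big[4\omega^2\mathbf{M}-\mathbf{K}\big]^{-1}\mathbf{G}(\phi,\phi),\qquad \Psi^{(N)}=-\mathbf{K}^{-1}\mathbf{G}(\phi,\phi),$$ $\Psi^{(2)}_{\alpha\alpha}=\Psi^{(2)}_{\beta\beta}=\Psi^{(P)}$, $\Psi^{(2)}_{\alpha\beta}=\Psi^{(2)}_{\beta\alpha}=\Psi^{(N)}$, and for $k,l,p\in\{\alpha,\beta\}$ $$\Xi_{klp}=\mathbf{G}(\Psi^{(2)}_{kl},\phi)+\mathbf{G}(\phi,\Psi^{(2)}_{lp})+\mathbf{H}(\phi,\phi,\phi),\qquad f_{\alpha klp}=-\frac{\phi^{T}\Xi_{klp}}{2i\omega},\qquad f_{\beta klp}=-f_{\alpha klp}.$$ Let $z_\alpha(t),z_\beta(t)$ be differentiable (complex-valued) functions satisfying the reduced dynamics $$\dot z_\alpha=i\omega z_\alpha+\sum_{k,l,p\in\{\alpha,\beta\}}f_{\alpha klp}z_kz_lz_p,\qquad \dot z_\beta=-i\omega z_\beta+\sum_{k,l,p\in\{\alpha,\beta\}}f_{\beta klp}z_kz_lz_p,$$ and set $r=z_\alpha+z_\beta$, $s=i\omega(z_\alpha-z_\beta)$. Then $\dot r=s$ and $$\dot s=-\omega^2r-(h+A)\,r^3-B\,r\,s^2,$$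 so that $\ddot r+\omega^2 r+(h+A)r^3+B\,r\,\dot r^2=0$, where $$h=\phi^{T}\mathbf{H}(\phi,\phi,\phi),\quad A=2\,\phi^{T}\mathbf{G}(\hat{\mathbf a},\phi),\quad B=2\,\phi^{T}\mathbf{G}(\hat{\mathbf b},\phi),\quad \hat{\mathbf a}=\tfrac12\big(\Psi^{(N)}+\Psi^{(P)}\big),\quad \hat{\mathbf b}=\frac{1}{2\omega^2}\big(\Psi^{(N)}-\Psi^{(P)}\big).$$
   Context: Let $N\ge1$, let $\mathbf{M},\mathbf{K}\in\mathbb{R}^{N\times N}$ be symmetric positive definite, let $\mathbf{G}:\mathbb{R}^N\times\mathbb{R}^N\to\mathbb{R}^N$ be a symmetric bilinear map and $\mathbf{H}:(\mathbb{R}^N)^3\to\mathbb{R}^N$ a symmetric trilinear map, both extended complex-multilinearly to $\mathbb{C}^N$. Let $\phi_1,\dots,\phi_N\in\mathbb{R}^N$ and $\omega_1,\dots,\omega_N>0$ satisfy $\mathbf{K}\phi_s=\omega_s^2\mathbf{M}\phi_s$ and $\phi_s^{T}\mathbf{M}\phi_t=\delta_{st}$ (mass-normalised linear vibration modes). *)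

theory Defs
  imports "HOL-Analysis.Analysis"
begin

definition sym_pos_def :: "real^'n^'n \<Rightarrow> bool" where
  "sym_pos_def A \<longleftrightarrow> transpose A = A \<and> (\<forall>x. x \<noteq> 0 \<longrightarrow> x \<bullet> (A *v x) > 0)"

definition sym_bilinear :: "('a::real_vector \<Rightarrow> 'a \<Rightarrow> 'b::real_vector) \<Rightarrow> bool" where
  "sym_bilinear G \<longleftrightarrow> bilinear G \<and> (\<forall>x y. G x y = G y x)"

definition sym_trilinear :: "('a::real_vector \<Rightarrow> 'a \<Rightarrow> 'a \<Rightarrow> 'b::real_vector) \<Rightarrow> bool" where
  "sym_trilinear H \<longleftrightarrow>
     (\<forall>y z. linear (\<lambda>x. H x y z)) \<and> (\<forall>x z. linear (\<lambda>y. H x y z)) \<and>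
     (\<forall>x y. linear (\<lambda>z. H x y z)) \<and>
     (\<forall>x y z. H x y z = H y x z \<and> H x y z = H x z y)"

text \<open>The two indices alpha = m and beta = m + N of the reduced (complex) coordinates.\<close>
datatype idx = Al | Be

definition Psi_P :: "real^'n^'n \<Rightarrow> real^'n^'n \<Rightarrow> (real^'n \<Rightarrow> real^'n \<Rightarrow> real^'n)
                     \<Rightarrow> real \<Rightarrow> real^'n \<Rightarrow> real^'n" where
  "Psi_P M K G w ph = matrix_inv ((4 * w\<^sup>2) *\<^sub>R M - K) *v G ph ph"

definition Psi_N :: "real^'n^'n \<Rightarrow> (real^'n \<Rightarrow> real^'n \<Rightarrow> real^'n)
                     \<Rightarrow> real^'n \<Rightarrow> real^'n" where
  "Psi_N K G ph = - (matrix_inv K *v G ph ph)"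

definition Psi2 :: "real^'n^'n \<Rightarrow> real^'n^'n \<Rightarrow> (real^'n \<Rightarrow> real^'n \<Rightarrow> real^'n)
                     \<Rightarrow> real \<Rightarrow> real^'n \<Rightarrow> idx \<Rightarrow> idx \<Rightarrow> real^'n" where
  "Psi2 M K G w ph k l = (if k = l then Psi_P M K G w ph else Psi_N K G ph)"

definition Xi :: "real^'n^'n \<Rightarrow> real^'n^'n \<Rightarrow> (real^'n \<Rightarrow> real^'n \<Rightarrow> real^'n)
                  \<Rightarrow> (real^'n \<Rightarrow> real^'n \<Rightarrow> real^'n \<Rightarrow> real^'n)
                  \<Rightarrow> real \<Rightarrow> real^'n \<Rightarrow> idx \<Rightarrow> idx \<Rightarrow> idx \<Rightarrow> real^'n" where
  "Xi M K G H w ph k l p =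
     G (Psi2 M K G w ph k l) ph + G ph (Psi2 M K G w ph l p) + H ph ph ph"

definition fcoef :: "real^'n^'n \<Rightarrow> real^'n^'n \<Rightarrow> (real^'n \<Rightarrow> real^'n \<Rightarrow> real^'n)
                  \<Rightarrow> (real^'n \<Rightarrow> real^'n \<Rightarrow> real^'n \<Rightarrow> real^'n)
                  \<Rightarrow> real \<Rightarrow> real^'n \<Rightarrow> idx \<Rightarrow> idx \<Rightarrow> idx \<Rightarrow> idx \<Rightarrow> complex" where
  "fcoef M K G H w ph j k l p =
     (let fa = - complex_of_real (ph \<bullet> Xi M K G H w ph k l p) / (2 * \<i> * complex_of_real w)
      in if j = Al then fa else - fa)"

end

theory Submission
  imports Defs
begin

text \<open>Adding the two reduced equations, the cubic terms cancel, so \<open>r' = s\<close>; subtracting them,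
  they double. Each coefficient \<open>\<phi>\<^sup>T \<Xi>\<^sub>k\<^sub>l\<^sub>p\<close> is \<open>h\<close> plus, for each of the pairs \<open>(k,l)\<close> and
  \<open>(l,p)\<close>, either \<open>P = \<phi>\<^sup>T G(\<Psi>\<^sup>P, \<phi>)\<close> (equal indices) or \<open>N = \<phi>\<^sup>T G(\<Psi>\<^sup>N, \<phi>)\<close> (distinct
  indices). Summed against \<open>z\<^sub>k z\<^sub>l z\<^sub>p\<close> this gives \<open>(h + N + P) r\<^sup>3 + (P - N) r (z\<^sub>\<alpha> - z\<^sub>\<beta>)\<^sup>2\<close>,
  and \<open>(z\<^sub>\<alpha> - z\<^sub>\<beta>)\<^sup>2 = - s\<^sup>2 / \<omega>\<^sup>2\<close>.\<close>

definition pairing_coef :: "real \<Rightarrow> real \<Rightarrow> real \<Rightarrow> idx \<Rightarrow> idx \<Rightarrow> idx \<Rightarrow> real" where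
  "pairing_coef P N h k l p = (if k = l then P else N) + (if l = p then P else N) + h"

lemma inner_Xi_eq_pairing_coef:
  assumes "sym_bilinear G"
  shows "ph \<bullet> Xi M K G H w ph k l p =
    pairing_coef (ph \<bullet> G (Psi_P M K G w ph) ph) (ph \<bullet> G (Psi_N K G ph) ph) (ph \<bullet> H ph ph ph) k l p"
proof -
  have "G ph x = G x ph" for x
    using assms by (simp add: sym_bilinear_def)
  then show ?thesis
    by (auto simp: Xi_def Psi2_def pairing_coef_def inner_add_right)
qed

lemma sum_pairing_coef_cubic:
  fixes z :: "idx \<Rightarrow> complex"
  shows "(\<Sum>k\<in>{Al,Be}. \<Sum>l\<in>{Al,Be}. \<Sum>p\<in>{Al,Be}.
            complex_of_real (pairing_coef P N h k l p) * z k * z l * z p)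
       = complex_of_real (h + N + P) * (z Al + z Be)^3
         + complex_of_real (P - N) * (z Al + z Be) * (z Al - z Be)\<^sup>2"
  by (simp add: pairing_coef_def algebra_simps power2_eq_square power3_eq_cube)

lemma reduced_cubic_sum_eq:
  fixes M K :: "real^'n^'n" and ph :: "real^'n" and H :: "real^'n \<Rightarrow> real^'n \<Rightarrow> real^'n \<Rightarrow> real^'n"
    and z :: "idx \<Rightarrow> complex"
  assumes "sym_bilinear G" and "w \<noteq> 0"
  defines "P \<equiv> ph \<bullet> G (Psi_P M K G w ph) ph" and "N \<equiv> ph \<bullet> G (Psi_N K G ph) ph"
    and "h \<equiv> ph \<bullet> H ph ph ph"
  shows "2 * \<i> * complex_of_real w * (\<Sum>k\<in>{Al,Be}. \<Sum>l\<in>{Al,Be}. \<Sum>p\<in>{Al,Be}.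
            fcoef M K G H w ph Al k l p * z k * z l * z p)
       = - complex_of_real (h + N + P) * (z Al + z Be)^3
         - complex_of_real (P - N) * (z Al + z Be) * (z Al - z Be)\<^sup>2"
proof -
  have "fcoef M K G H w ph Al k l p =
          - complex_of_real (pairing_coef P N h k l p) / (2 * \<i> * complex_of_real w)" for k l p
    by (simp add: fcoef_def inner_Xi_eq_pairing_coef[OF assms(1)] P_def N_def h_def)
  then have "(\<Sum>k\<in>{Al,Be}. \<Sum>l\<in>{Al,Be}. \<Sum>p\<in>{Al,Be}. fcoef M K G H w ph Al k l p * z k * z l * z p)
      = - (\<Sum>k\<in>{Al,Be}. \<Sum>l\<in>{Al,Be}. \<Sum>p\<in>{Al,Be}.
             complex_of_real (pairing_coef P N h k l p) * z k * z l * z p) / (2 * \<i> * complex_of_real w)"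
    by (simp add: add_divide_distrib diff_divide_distrib)
  also have "\<dots> = - (complex_of_real (h + N + P) * (z Al + z Be)^3
                      + complex_of_real (P - N) * (z Al + z Be) * (z Al - z Be)\<^sup>2)
                    / (2 * \<i> * complex_of_real w)"
    by (simp only: sum_pairing_coef_cubic)
  finally show ?thesis
    using \<open>w \<noteq> 0\<close> by (simp add: field_simps)
qed

lemma fcoef_Be: "fcoef M K G H w ph Be k l p = - fcoef M K G H w ph Al k l p"
  by (simp add: fcoef_def Let_def)

lemma reduced_pair_has_oscillator_derivative:
  fixes za zb :: "real \<Rightarrow> complex" and w :: real
  assumes "(za has_vector_derivative (\<i> * complex_of_real w * za t + F)) (at t)"
    and "(zb has_vector_derivative (- \<i> * complex_of_real w * zb t - F)) (at t)"
  shows "((\<lambda>t. za t + zb t) has_vector_derivative \<i> * complex_of_real w * (za t - zb t)) (at t)"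
    and "((\<lambda>t. \<i> * complex_of_real w * (za t - zb t)) has_vector_derivative
           - complex_of_real (w\<^sup>2) * (za t + zb t) + 2 * \<i> * complex_of_real w * F) (at t)"
proof -
  show "((\<lambda>t. za t + zb t) has_vector_derivative \<i> * complex_of_real w * (za t - zb t)) (at t)"
    using has_vector_derivative_add[OF assms] by (simp add: algebra_simps)
  have "((\<lambda>t. \<i> * complex_of_real w * (za t - zb t)) has_vector_derivative
          \<i> * complex_of_real w * ((\<i> * complex_of_real w * za t + F)
            - (- \<i> * complex_of_real w * zb t - F))) (at t)"
    by (intro has_vector_derivative_mult_right has_vector_derivative_diff assms)
  then show "((\<lambda>t. \<i> * complex_of_real w * (za t - zb t)) has_vector_derivative
           - complex_of_real (w\<^sup>2) * (za t + zb t) + 2 * \<i> * complex_of_real w * F) (at t)"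
    by (simp add: algebra_simps power2_eq_square)
qed

theorem mainTheorem6:
  fixes M K :: "real^'n^'n"
    and G :: "real^'n \<Rightarrow> real^'n \<Rightarrow> real^'n"
    and H :: "real^'n \<Rightarrow> real^'n \<Rightarrow> real^'n \<Rightarrow> real^'n"
    and phi :: "'n \<Rightarrow> real^'n" and omega :: "'n \<Rightarrow> real"
    and m :: 'n
    and I :: "real set"
    and z :: "idx \<Rightarrow> real \<Rightarrow> complex"
  assumes M: "sym_pos_def M" and K: "sym_pos_def K"
    and G: "sym_bilinear G" and H: "sym_trilinear H"
    and eig: "\<forall>s. K *v phi s = (omega s)\<^sup>2 *\<^sub>R (M *v phi s)"
    and orth: "\<forall>s t. phi s \<bullet> (M *v phi t) = (if s = t then 1 else 0)"
    and pos: "\<forall>s. omega s > 0"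
    and nonres: "\<forall>r. 4 * (omega m)\<^sup>2 \<noteq> (omega r)\<^sup>2"
    and I: "open I"
    and dyn_a: "\<forall>t\<in>I. (z Al has_vector_derivative
        (\<i> * complex_of_real (omega m) * z Al t
         + (\<Sum>k\<in>{Al,Be}. \<Sum>l\<in>{Al,Be}. \<Sum>p\<in>{Al,Be}.
              fcoef M K G H (omega m) (phi m) Al k l p * z k t * z l t * z p t))) (at t)"
    and dyn_b: "\<forall>t\<in>I. (z Be has_vector_derivative
        (- \<i> * complex_of_real (omega m) * z Be t
         + (\<Sum>k\<in>{Al,Be}. \<Sum>l\<in>{Al,Be}. \<Sum>p\<in>{Al,Be}.
              fcoef M K G H (omega m) (phi m) Be k l p * z k t * z l t * z p t))) (at t)"
  defines "w \<equiv> omega m" and "ph \<equiv> phi m"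
  defines "r \<equiv> (\<lambda>t. z Al t + z Be t)"
    and "s \<equiv> (\<lambda>t. \<i> * complex_of_real w * (z Al t - z Be t))"
    and "h \<equiv> ph \<bullet> H ph ph ph"
    and "ahat \<equiv> (1/2) *\<^sub>R (Psi_N K G ph + Psi_P M K G w ph)"
    and "bhat \<equiv> (1 / (2 * w\<^sup>2)) *\<^sub>R (Psi_N K G ph - Psi_P M K G w ph)"
  defines "A \<equiv> 2 * (ph \<bullet> G ahat ph)" and "B \<equiv> 2 * (ph \<bullet> G bhat ph)"
  shows "\<forall>t\<in>I. (r has_vector_derivative s t) (at t)
           \<and> (s has_vector_derivative
                (- complex_of_real (w\<^sup>2) * r t - complex_of_real (h + A) * (r t)^3
                 - complex_of_real B * r t * (s t)\<^sup>2)) (at t)"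
proof
  fix t assume "t \<in> I"
  have w0: "w \<noteq> 0" using pos unfolding w_def by (metis less_irrefl)
  have Gb: "bilinear G" using G by (simp add: sym_bilinear_def)
  define P where "P = ph \<bullet> G (Psi_P M K G w ph) ph"
  define N where "N = ph \<bullet> G (Psi_N K G ph) ph"
  define F where "F = (\<Sum>k\<in>{Al,Be}. \<Sum>l\<in>{Al,Be}. \<Sum>p\<in>{Al,Be}.
                         fcoef M K G H w ph Al k l p * z k t * z l t * z p t)"
  have A: "A = N + P"
    by (simp add: A_def ahat_def N_def P_def bilinear_lmul[OF Gb] bilinear_ladd[OF Gb] inner_add_right)
  have B: "B = (N - P) / w\<^sup>2"
    using w0 by (simp add: B_def bhat_def N_def P_def bilinear_lmul[OF Gb] bilinear_lsub[OF Gb]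
                           inner_diff_right field_simps)
  have Fb: "(\<Sum>k\<in>{Al,Be}. \<Sum>l\<in>{Al,Be}. \<Sum>p\<in>{Al,Be}.
              fcoef M K G H w ph Be k l p * z k t * z l t * z p t) = - F"
    by (simp add: F_def fcoef_Be sum_negf)
  have da: "(z Al has_vector_derivative (\<i> * complex_of_real w * z Al t + F)) (at t)"
    using dyn_a \<open>t \<in> I\<close> unfolding F_def w_def ph_def by blast
  have db: "(z Be has_vector_derivative (- \<i> * complex_of_real w * z Be t - F)) (at t)"
    using dyn_b \<open>t \<in> I\<close> unfolding diff_conv_add_uminus Fb[symmetric] w_def ph_def by blast
  note osc = reduced_pair_has_oscillator_derivative[OF da db]
  have "2 * \<i> * complex_of_real w * F
        = - complex_of_real (h + N + P) * (r t)^3 - complex_of_real (P - N) * r t * (z Al t - z Be t)\<^sup>2"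
    unfolding F_def r_def P_def N_def h_def by (rule reduced_cubic_sum_eq[OF G w0])
  also have "\<dots> = - complex_of_real (h + A) * (r t)^3 - complex_of_real B * r t * (s t)\<^sup>2"
    using w0 unfolding A B s_def by (simp add: field_simps power2_eq_square)
  finally have "- complex_of_real (w\<^sup>2) * r t + 2 * \<i> * complex_of_real w * F
        = - complex_of_real (w\<^sup>2) * r t - complex_of_real (h + A) * (r t)^3
          - complex_of_real B * r t * (s t)\<^sup>2"
    by (simp add: algebra_simps)
  with osc show "(r has_vector_derivative s t) (at t) \<and> (s has_vector_derivative
                (- complex_of_real (w\<^sup>2) * r t - complex_of_real (h + A) * (r t)^3
                 - complex_of_real B * r t * (s t)\<^sup>2)) (at t)"
    unfolding r_def s_def by metis
qed

end
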